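(* Let $A:\ell_2\to\ell_2$ be a bounded operator with matrix $(a_{m,n})_{m,n\ge0}$, $a_{m,n}=\langle Ae_n,e_m\rangle$, where $(e_n)$ is the canonical basis. Let $(d_n)_{n\ge0}$ be positive numbers such that for all $m,n$: $d_m<d_n\Rightarrow a_{m,n}=0$. Then the matrix $\big(d_m^{-1}a_{m,n}d_n\big)_{m,n}$ (i.e. $D^{-1}AD$ with $D$ the diagonal operator $De_n=d_ne_n$) defines a bounded operator on $\ell_2$ and $\|D^{-1}AD\|\le\|A\|$. *)

theory Defs
  imports "HOL-Analysis.Analysis"
begin

definition l2 :: "(nat \<Rightarrow> complex) set" where
  "l2 = {x. summable (\<lambda>n. (cmod (x n))\<^sup>2)}"

definition l2norm :: "(nat \<Rightarrow> complex) \<Rightarrow> real" where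
  "l2norm x = sqrt (\<Sum>n. (cmod (x n))\<^sup>2)"

definition ebasis :: "nat \<Rightarrow> nat \<Rightarrow> complex" where
  "ebasis n = (\<lambda>k. if k = n then 1 else 0)"

text \<open>Bounded linear operator on l2 (only its values on l2 matter).\<close>
definition bounded_op :: "((nat \<Rightarrow> complex) \<Rightarrow> (nat \<Rightarrow> complex)) \<Rightarrow> bool" where
  "bounded_op T \<longleftrightarrow>
     (\<forall>x\<in>l2. T x \<in> l2) \<and>
     (\<forall>x\<in>l2. \<forall>y\<in>l2. T (\<lambda>k. x k + y k) = (\<lambda>k. T x k + T y k)) \<and>
     (\<forall>x\<in>l2. \<forall>c. T (\<lambda>k. c * x k) = (\<lambda>k. c * T x k)) \<and>
     (\<exists>K. \<forall>x\<in>l2. l2norm (T x) \<le> K * l2norm x)"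

definition opnorm :: "((nat \<Rightarrow> complex) \<Rightarrow> (nat \<Rightarrow> complex)) \<Rightarrow> real" where
  "opnorm T = Sup {l2norm (T x) | x. x \<in> l2 \<and> l2norm x \<le> 1}"

definition matrix_entry :: "((nat \<Rightarrow> complex) \<Rightarrow> (nat \<Rightarrow> complex)) \<Rightarrow> nat \<Rightarrow> nat \<Rightarrow> complex" where
  "matrix_entry T m n = T (ebasis n) m"

end

theory Submission
  imports Defs
begin

text \<open>It suffices to bound every finite section \<open>m, n < N\<close> of \<open>D\<^sup>-\<^sup>1AD\<close> by \<open>\<parallel>A\<parallel>\<close>.
  On a finite section \<open>D\<close> takes finitely many values, and conjugation by \<open>D\<close> (up to a scalar)
  is a product of elementary steps: multiply the coordinates with \<open>d < \<theta>\<close> by some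
  \<open>t \<in> (0, 1]\<close>. Because \<open>a\<^sub>m\<^sub>n = 0\<close> whenever \<open>d\<^sub>m < \<theta> \<le> d\<^sub>n\<close>, such a step turns the matrix
  \<open>c\<close> into \<open>t c + (1 - t) (c + U c U) / 2\<close>, where \<open>U\<close> is the unitary diagonal sign flip of
  those coordinates; a convex combination of matrices of norm at most \<open>K\<close> again has norm at
  most \<open>K\<close>. Uniformly bounded sections then define a bounded operator on \<open>\<ell>\<^sub>2\<close> with the
  same bound.\<close>

section \<open>Sequences in \<open>\<ell>\<^sub>2\<close> and bounded operators\<close>

lemma l2_zero: "(\<lambda>k. 0) \<in> l2"
  by (simp add: l2_def)

lemma l2_scale: "x \<in> l2 \<Longrightarrow> (\<lambda>k. c * x k) \<in> l2"
  by (simp add: l2_def norm_mult power_mult_distrib summable_mult)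

lemma l2_finite_support: "finite {k. x k \<noteq> 0} \<Longrightarrow> x \<in> l2"
  unfolding l2_def by (auto intro: summable_finite[of "{k. x k \<noteq> 0}"])

lemma l2norm_nonneg: "x \<in> l2 \<Longrightarrow> 0 \<le> l2norm x"
  unfolding l2norm_def l2_def by (simp add: suminf_nonneg)

lemma l2norm_scale: "x \<in> l2 \<Longrightarrow> l2norm (\<lambda>k. c * x k) = cmod c * l2norm x"
  unfolding l2norm_def l2_def
  by (simp add: norm_mult power_mult_distrib suminf_mult real_sqrt_mult)

lemma l2norm_eq_0: "x \<in> l2 \<Longrightarrow> l2norm x = 0 \<Longrightarrow> x = (\<lambda>k. 0)"
  unfolding l2norm_def l2_def by (auto simp: suminf_nonneg suminf_eq_zero_iff)

lemma L2_set_squared: "(L2_set f A)\<^sup>2 = (\<Sum>i\<in>A. (f i)\<^sup>2)"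
  unfolding L2_set_def by (simp add: sum_nonneg)

lemma L2_set_le_l2norm: "x \<in> l2 \<Longrightarrow> L2_set (\<lambda>n. cmod (x n)) {..<N} \<le> l2norm x"
  unfolding l2norm_def l2_def L2_set_def by (intro real_sqrt_le_mono sum_le_suminf) auto

definition truncate :: "nat \<Rightarrow> (nat \<Rightarrow> complex) \<Rightarrow> nat \<Rightarrow> complex" where
  "truncate N x = (\<lambda>k. if k < N then x k else 0)"

lemma l2_truncate: "truncate N x \<in> l2"
  by (rule l2_finite_support) (auto simp: truncate_def intro: finite_subset[of _ "{..<N}"])

lemma l2norm_truncate: "l2norm (truncate N x) = L2_set (\<lambda>n. cmod (x n)) {..<N}"
proof -
  have "(\<Sum>n. (cmod (truncate N x n))\<^sup>2) = (\<Sum>n<N. (cmod (truncate N x n))\<^sup>2)"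
    by (rule suminf_finite) (auto simp: truncate_def)
  then show ?thesis unfolding l2norm_def L2_set_def by (simp add: truncate_def)
qed

lemma sum_mult_ebasis: "finite A \<Longrightarrow> n \<in> A \<Longrightarrow> (\<Sum>k\<in>A. c k * ebasis n k) = c n"
  unfolding ebasis_def by (simp add: if_distrib cong: if_cong)

lemma sums_mult_ebasis: "(\<lambda>k. c k * ebasis n k) sums c n"
  using sums_single[of n c] unfolding ebasis_def by (simp add: if_distrib cong: if_cong)

lemma L2_set_ebasis: "finite A \<Longrightarrow> n \<in> A \<Longrightarrow> L2_set (\<lambda>k. cmod (ebasis n k)) A = 1"
  unfolding L2_set_def ebasis_def by (simp add: if_distrib[of "\<lambda>z. (cmod z)\<^sup>2"] cong: if_cong)

lemma summable_mult_of_square_summable: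
  fixes b x :: "nat \<Rightarrow> complex"
  assumes "summable (\<lambda>n. (cmod (b n))\<^sup>2)" "summable (\<lambda>n. (cmod (x n))\<^sup>2)"
  shows "summable (\<lambda>n. b n * x n)"
proof (rule summable_comparison_test'[where N=0])
  show "summable (\<lambda>n. ((cmod (b n))\<^sup>2 + (cmod (x n))\<^sup>2) / 2)"
    using assms by (intro summable_divide summable_add)
  have "0 \<le> (cmod (b n) - cmod (x n))\<^sup>2" for n by simp
  then show "norm (b n * x n) \<le> ((cmod (b n))\<^sup>2 + (cmod (x n))\<^sup>2) / 2" for n
    by (simp add: norm_mult power2_eq_square algebra_simps)
qed

lemma le_of_square_le_mult:
  fixes s a :: real
  assumes "0 \<le> s" "0 \<le> a" "s\<^sup>2 \<le> a * s"
  shows "s \<le> a"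
  using assms by (cases "s = 0") (auto simp: power2_eq_square)

lemma bounded_opD:
  assumes "bounded_op A" "x \<in> l2"
  shows "A x \<in> l2" "y \<in> l2 \<Longrightarrow> A (\<lambda>k. x k + y k) = (\<lambda>k. A x k + A y k)"
    "A (\<lambda>k. c * x k) = (\<lambda>k. c * A x k)"
  using assms unfolding bounded_op_def by blast+

lemma bounded_op_zero: "bounded_op A \<Longrightarrow> A (\<lambda>k. 0) = (\<lambda>k. 0)"
  using bounded_opD(3)[OF _ l2_zero, of A 0] by simp

lemma bounded_op_truncate:
  assumes "bounded_op A"
  shows "A (truncate N x) = (\<lambda>m. \<Sum>n<N. matrix_entry A m n * x n)"
proof (induction N)
  case 0
  have "truncate 0 x = (\<lambda>k. 0)" by (simp add: truncate_def)
  then show ?case using bounded_op_zero[OF assms] by simp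
next
  case (Suc N)
  have "truncate (Suc N) x = (\<lambda>k. truncate N x k + x N * ebasis N k)"
    by (auto simp: truncate_def ebasis_def less_Suc_eq)
  moreover have "ebasis N \<in> l2" "(\<lambda>k. x N * ebasis N k) \<in> l2"
    by (auto intro!: l2_finite_support simp: ebasis_def)
  ultimately show ?case
    using bounded_opD(2)[OF assms l2_truncate] bounded_opD(3)[OF assms]
    by (simp add: Suc matrix_entry_def mult.commute)
qed

lemma bdd_above_opnorm_set:
  assumes "bounded_op A"
  shows "bdd_above {l2norm (A x) | x. x \<in> l2 \<and> l2norm x \<le> 1}"
proof -
  obtain K where K: "\<forall>x\<in>l2. l2norm (A x) \<le> K * l2norm x"
    using assms unfolding bounded_op_def by blast
  have "l2norm (A x) \<le> \<bar>K\<bar>" if "x \<in> l2" "l2norm x \<le> 1" for x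
  proof -
    have "l2norm (A x) \<le> \<bar>K\<bar> * l2norm x"
      using K that l2norm_nonneg[of x] by (meson abs_ge_self mult_right_mono order.trans)
    also have "\<dots> \<le> \<bar>K\<bar>" using that by (simp add: mult_left_le)
    finally show ?thesis .
  qed
  then show ?thesis by (intro bdd_aboveI[where M = "\<bar>K\<bar>"]) blast
qed

lemma opnorm_nonneg:
  assumes "bounded_op A"
  shows "0 \<le> opnorm A"
proof -
  have "0 \<in> {l2norm (A x) | x. x \<in> l2 \<and> l2norm x \<le> 1}"
    using l2_zero bounded_op_zero[OF assms] by (force simp: l2norm_def)
  then show ?thesis
    unfolding opnorm_def using bdd_above_opnorm_set[OF assms] by (rule cSup_upper)
qed

lemma l2norm_le_opnorm:
  assumes A: "bounded_op A" and x: "x \<in> l2"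
  shows "l2norm (A x) \<le> opnorm A * l2norm x"
proof (cases "l2norm x = 0")
  case True
  then show ?thesis using l2norm_eq_0[OF x] bounded_op_zero[OF A] by (simp add: l2norm_def)
next
  case False
  define r where "r = l2norm x"
  have r: "0 < r" using False l2norm_nonneg[OF x] by (simp add: r_def)
  let ?u = "\<lambda>k. of_real (1 / r) * x k"
  have "?u \<in> l2" by (rule l2_scale[OF x])
  moreover have "l2norm ?u \<le> 1" unfolding l2norm_scale[OF x] using r by (simp add: r_def norm_divide)
  ultimately have "l2norm (A ?u) \<in> {l2norm (A x) | x. x \<in> l2 \<and> l2norm x \<le> 1}"
    by (intro CollectI exI[of _ ?u]) simp
  then have "l2norm (A ?u) \<le> opnorm A"
    unfolding opnorm_def using bdd_above_opnorm_set[OF A] by (rule cSup_upper)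
  moreover have "l2norm (A ?u) = l2norm (A x) / r"
    unfolding bounded_opD(3)[OF A x] l2norm_scale[OF bounded_opD(1)[OF A x]]
    using r by (simp add: norm_divide)
  ultimately have "l2norm (A x) / r \<le> opnorm A" by simp
  then show ?thesis using r by (simp add: r_def pos_divide_le_eq)
qed

lemma opnorm_le:
  assumes "\<forall>x\<in>l2. l2norm (T x) \<le> K * l2norm x" "0 \<le> K"
  shows "opnorm T \<le> K"
  unfolding opnorm_def
proof (rule cSup_least)
  show "{l2norm (T x) | x. x \<in> l2 \<and> l2norm x \<le> 1} \<noteq> {}"
    using l2_zero by (force simp: l2norm_def)
  fix r assume "r \<in> {l2norm (T x) | x. x \<in> l2 \<and> l2norm x \<le> 1}"
  then obtain x where x: "r = l2norm (T x)" "x \<in> l2" "l2norm x \<le> 1" by blast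
  then have "r \<le> K * l2norm x" using assms(1) by simp
  also have "\<dots> \<le> K" using x(3) assms(2) by (simp add: mult_left_le)
  finally show "r \<le> K" .
qed

section \<open>Finite sections of matrices\<close>

definition section_form ::
    "nat \<Rightarrow> (nat \<Rightarrow> nat \<Rightarrow> complex) \<Rightarrow> (nat \<Rightarrow> complex) \<Rightarrow> (nat \<Rightarrow> complex) \<Rightarrow> complex" where
  "section_form N c x y = (\<Sum>m<N. \<Sum>n<N. c m n * x n * cnj (y m))"

definition section_bounded :: "nat \<Rightarrow> real \<Rightarrow> (nat \<Rightarrow> nat \<Rightarrow> complex) \<Rightarrow> bool" where
  "section_bounded N K c \<longleftrightarrow> (\<forall>x y. cmod (section_form N c x y)
      \<le> K * L2_set (\<lambda>n. cmod (x n)) {..<N} * L2_set (\<lambda>m. cmod (y m)) {..<N})"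

lemma section_boundedD:
  "section_bounded N K c \<Longrightarrow> cmod (section_form N c x y)
      \<le> K * L2_set (\<lambda>n. cmod (x n)) {..<N} * L2_set (\<lambda>m. cmod (y m)) {..<N}"
  unfolding section_bounded_def by blast

lemma section_bounded_cong:
  assumes "section_bounded N K c" "\<And>m n. m < N \<Longrightarrow> n < N \<Longrightarrow> c m n = c' m n"
  shows "section_bounded N K c'"
proof -
  have "section_form N c' x y = section_form N c x y" for x y
    unfolding section_form_def by (intro sum.cong refl) (simp add: assms(2))
  then show ?thesis using assms(1) unfolding section_bounded_def by simp
qed

lemma section_bounded_convex:
  assumes "section_bounded N K c" "section_bounded N K c'" "0 \<le> t" "t \<le> 1"
  shows "section_bounded N K (\<lambda>m n. of_real t * c m n + of_real (1 - t) * c' m n)"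
  unfolding section_bounded_def
proof (intro allI)
  fix x y
  let ?X = "L2_set (\<lambda>n. cmod (x n)) {..<N}" and ?Y = "L2_set (\<lambda>m. cmod (y m)) {..<N}"
  have "section_form N (\<lambda>m n. of_real t * c m n + of_real (1 - t) * c' m n) x y
      = of_real t * section_form N c x y + of_real (1 - t) * section_form N c' x y"
    unfolding section_form_def
    by (simp add: distrib_right sum.distrib sum_distrib_left mult.assoc)
  also have "cmod \<dots> \<le> t * cmod (section_form N c x y) + (1 - t) * cmod (section_form N c' x y)"
    using norm_triangle_ineq[of "of_real t * section_form N c x y"
        "of_real (1 - t) * section_form N c' x y"] assms(3,4)
    by (simp only: norm_mult norm_of_real abs_of_nonneg diff_ge_0_iff_ge)
  also have "\<dots> \<le> t * (K * ?X * ?Y) + (1 - t) * (K * ?X * ?Y)"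
    using assms by (intro add_mono mult_left_mono section_boundedD) auto
  also have "\<dots> = K * ?X * ?Y" by (simp add: algebra_simps)
  finally show "cmod (section_form N (\<lambda>m n. of_real t * c m n + of_real (1 - t) * c' m n) x y)
      \<le> K * ?X * ?Y" .
qed

lemma section_bounded_unitary_diagonal_conj:
  assumes "section_bounded N K c" "\<And>i. cmod (u i) = 1"
  shows "section_bounded N K (\<lambda>m n. cnj (u m) * c m n * u n)"
  unfolding section_bounded_def
proof (intro allI)
  fix x y
  have "section_form N (\<lambda>m n. cnj (u m) * c m n * u n) x y
      = section_form N c (\<lambda>n. u n * x n) (\<lambda>m. u m * y m)"
    unfolding section_form_def by (intro sum.cong refl) (simp add: mult_ac)
  moreover have "cmod (u i * z i) = cmod (z i)" for z i by (simp add: norm_mult assms(2))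
  ultimately show "cmod (section_form N (\<lambda>m n. cnj (u m) * c m n * u n) x y)
      \<le> K * L2_set (\<lambda>n. cmod (x n)) {..<N} * L2_set (\<lambda>m. cmod (y m)) {..<N}"
    using section_boundedD[OF assms(1), of "\<lambda>n. u n * x n" "\<lambda>m. u m * y m"] by simp
qed

lemma section_bounded_adjoint:
  assumes "section_bounded N K c"
  shows "section_bounded N K (\<lambda>m n. cnj (c n m))"
  unfolding section_bounded_def
proof (intro allI)
  fix x y
  have "section_form N (\<lambda>m n. cnj (c n m)) x y = cnj (section_form N c y x)"
    unfolding section_form_def by (subst sum.swap) (simp add: mult_ac)
  then show "cmod (section_form N (\<lambda>m n. cnj (c n m)) x y)
      \<le> K * L2_set (\<lambda>n. cmod (x n)) {..<N} * L2_set (\<lambda>m. cmod (y m)) {..<N}"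
    using section_boundedD[OF assms, of y x] by (simp add: mult_ac)
qed

lemma section_bounded_block_scale:
  fixes d :: "nat \<Rightarrow> real"
  assumes c: "section_bounded N K c" and zero: "\<And>m n. d m < \<theta> \<Longrightarrow> \<theta> \<le> d n \<Longrightarrow> c m n = 0"
    and t: "0 < t" "t \<le> 1"
  defines "s i \<equiv> if d i < \<theta> then t else 1"
  shows "section_bounded N K (\<lambda>m n. c m n * of_real (s n / s m))"
proof -
  define u :: "nat \<Rightarrow> complex" where "u i = (if d i < \<theta> then -1 else 1)" for i
  have "section_bounded N K (\<lambda>m n. cnj (u m) * c m n * u n)"
    by (rule section_bounded_unitary_diagonal_conj[OF c]) (simp add: u_def)
  then have "section_bounded N K
      (\<lambda>m n. of_real (1/2) * c m n + of_real (1 - 1/2) * (cnj (u m) * c m n * u n))"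
    by (rule section_bounded_convex[OF c]) auto
  then have "section_bounded N K (\<lambda>m n. of_real t * c m n + of_real (1 - t) *
      (of_real (1/2) * c m n + of_real (1 - 1/2) * (cnj (u m) * c m n * u n)))"
    by (rule section_bounded_convex[OF c]) (use t in auto)
  then show ?thesis
  proof (rule section_bounded_cong)
    fix m n
    show "of_real t * c m n + of_real (1 - t) *
        (of_real (1/2) * c m n + of_real (1 - 1/2) * (cnj (u m) * c m n * u n))
      = c m n * of_real (s n / s m)"
      using zero[of m n] t
      by (cases "d m < \<theta>"; cases "d n < \<theta>") (auto simp: s_def u_def algebra_simps)
  qed
qed

lemma section_bounded_diagonal_conj:
  fixes d :: "nat \<Rightarrow> real"
  assumes "finite V" "\<forall>v\<in>V. 0 < v" "d ` {..<N} \<subseteq> V"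
    and "section_bounded N K c" "\<And>m n. d m < d n \<Longrightarrow> c m n = 0"
  shows "section_bounded N K (\<lambda>m n. c m n * of_real (d n / d m))"
  using assms
proof (induction V arbitrary: d rule: finite_linorder_max_induct)
  case empty
  then have "N = 0" by auto
  show ?case using empty.prems(3) by (rule section_bounded_cong) (simp add: \<open>N = 0\<close>)
next
  case (insert b A)
  show ?case
  proof (cases "A = {}")
    case True
    then have const: "d n = b" if "n < N" for n using insert.prems(2) that by auto
    show ?thesis using insert.prems(3)
      by (rule section_bounded_cong) (use insert.prems(1) in \<open>simp add: const\<close>)
  next
    case False
    txt \<open>Cap \<open>d\<close> at the second largest value \<open>M\<close>; what is left is a block scaling by
      \<open>M / b\<close> of the levels below \<open>b\<close>.\<close>
    define M where "M = Max A"
    have "M \<in> A" using False insert.hyps(1) by (simp add: M_def)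
    then have M: "0 < M" "M < b" using insert by auto
    define d' where "d' n = min (d n) M" for n
    have d'_eq: "d' i = (if d i < b then d i else M)" if "i < N" for i
    proof -
      have "d i \<in> insert b A" using insert.prems(2) that by auto
      moreover have "v \<le> M" if "v \<in> A" for v using insert.hyps(1) that by (simp add: M_def)
      ultimately show ?thesis using M(2) by (auto simp: d'_def)
    qed
    have d'_values: "d' ` {..<N} \<subseteq> A"
      using insert.prems(2) \<open>M \<in> A\<close> M(2) by (force simp: d'_def min_def)
    define s where "s i = (if d i < b then M / b else 1)" for i
    have rescale: "d i = b / M * (d' i * s i)" and pos: "0 < d' i" "0 < s i" if "i < N" for i
      using insert.prems(1,2) insert.hyps(2) M that by (force simp: d'_eq s_def)+
    have "section_bounded N K (\<lambda>m n. c m n * of_real (d' n / d' m))"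
      using insert.prems(1,3,4) by (intro insert.IH d'_values) (auto simp: d'_def)
    then have "section_bounded N K (\<lambda>m n. c m n * of_real (d' n / d' m) * of_real (s n / s m))"
      unfolding s_def by (rule section_bounded_block_scale) (use M insert.prems(4) in auto)
    then show ?thesis
    proof (rule section_bounded_cong)
      fix m n assume "m < N" "n < N"
      then have "d n / d m = d' n / d' m * (s n / s m)"
        using M pos[of m] by (simp add: rescale field_simps)
      then show "c m n * of_real (d' n / d' m) * of_real (s n / s m) = c m n * of_real (d n / d m)"
        by (simp only: of_real_mult mult.assoc)
    qed
  qed
qed

lemma section_bounded_matrix_entry:
  assumes A: "bounded_op A"
  shows "section_bounded N (opnorm A) (matrix_entry A)"
  unfolding section_bounded_def
proof (intro allI)
  fix x y :: "nat \<Rightarrow> complex"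
  let ?X = "L2_set (\<lambda>n. cmod (x n)) {..<N}" and ?Y = "L2_set (\<lambda>m. cmod (y m)) {..<N}"
  let ?Ax = "A (truncate N x)"
  have "section_form N (matrix_entry A) x y = (\<Sum>m<N. ?Ax m * cnj (y m))"
    unfolding section_form_def bounded_op_truncate[OF A] by (simp add: sum_distrib_right)
  also have "cmod \<dots> \<le> (\<Sum>m<N. cmod (?Ax m) * cmod (y m))"
    by (rule order_trans[OF norm_sum]) (simp add: norm_mult)
  also have "\<dots> \<le> L2_set (\<lambda>m. cmod (?Ax m)) {..<N} * ?Y"
    using L2_set_mult_ineq[of "\<lambda>m. cmod (?Ax m)" "\<lambda>m. cmod (y m)"] by simp
  also have "\<dots> \<le> l2norm ?Ax * ?Y"
    by (intro mult_right_mono L2_set_le_l2norm bounded_opD(1)[OF A l2_truncate]) simp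
  also have "\<dots> \<le> opnorm A * ?X * ?Y"
    using l2norm_le_opnorm[OF A l2_truncate, of N x]
    by (intro mult_right_mono) (simp_all add: l2norm_truncate)
  finally show "cmod (section_form N (matrix_entry A) x y) \<le> opnorm A * ?X * ?Y" .
qed

section \<open>Matrices with uniformly bounded sections\<close>

lemma section_bounded_apply:
  assumes "section_bounded N K c" "0 \<le> K"
  shows "L2_set (\<lambda>m. cmod (\<Sum>n<N. c m n * x n)) {..<N} \<le> K * L2_set (\<lambda>n. cmod (x n)) {..<N}"
proof (rule le_of_square_le_mult)
  let ?y = "\<lambda>m. \<Sum>n<N. c m n * x n"
  let ?T = "L2_set (\<lambda>m. cmod (?y m)) {..<N}"
  have "section_form N c x ?y = (\<Sum>m<N. ?y m * cnj (?y m))"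
    unfolding section_form_def by (simp add: sum_distrib_right)
  also have "\<dots> = of_real (?T\<^sup>2)"
    by (simp only: L2_set_squared of_real_sum complex_norm_square)
  finally have "cmod (section_form N c x ?y) = ?T\<^sup>2" by (simp add: norm_power)
  then show "?T\<^sup>2 \<le> K * L2_set (\<lambda>n. cmod (x n)) {..<N} * ?T"
    using section_boundedD[OF assms(1), of x ?y] by simp
qed (use assms(2) in auto)

lemma section_bounded_column:
  assumes "section_bounded N K c" "0 \<le> K" "n < N"
  shows "L2_set (\<lambda>m. cmod (c m n)) {..<N} \<le> K"
proof -
  have "(\<Sum>k<N. c m k * ebasis n k) = c m n" for m
    using assms(3) by (simp add: sum_mult_ebasis)
  moreover have "L2_set (\<lambda>k. cmod (ebasis n k)) {..<N} = 1"
    using assms(3) by (simp add: L2_set_ebasis)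
  ultimately show ?thesis
    using section_bounded_apply[OF assms(1,2), of "ebasis n"] by simp
qed

lemma section_bounded_row_summable:
  assumes "\<And>N. section_bounded N K c" "0 \<le> K"
  shows "summable (\<lambda>n. (cmod (c m n))\<^sup>2)"
proof (rule summableI_nonneg_bounded)
  fix N
  define N' where "N' = max N (Suc m)"
  have "L2_set (\<lambda>n. cmod (c m n)) {..<N'} \<le> K"
    using section_bounded_column[OF section_bounded_adjoint[OF assms(1)] assms(2), of m]
    by (simp add: N'_def)
  then have "(\<Sum>n<N'. (cmod (c m n))\<^sup>2) \<le> K\<^sup>2"
    by (metis L2_set_squared L2_set_nonneg power_mono)
  moreover have "(\<Sum>n<N. (cmod (c m n))\<^sup>2) \<le> (\<Sum>n<N'. (cmod (c m n))\<^sup>2)"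
    by (rule sum_mono2) (auto simp: N'_def)
  ultimately show "(\<Sum>n<N. (cmod (c m n))\<^sup>2) \<le> K\<^sup>2" by simp
qed simp

lemma section_bounded_summable_row_mult:
  assumes "\<And>N. section_bounded N K c" "0 \<le> K" "x \<in> l2"
  shows "summable (\<lambda>n. c m n * x n)"
  using assms(3) section_bounded_row_summable[OF assms(1,2)]
  by (intro summable_mult_of_square_summable) (simp_all add: l2_def)

definition matrix_apply :: "(nat \<Rightarrow> nat \<Rightarrow> complex) \<Rightarrow> (nat \<Rightarrow> complex) \<Rightarrow> nat \<Rightarrow> complex" where
  "matrix_apply c x = (\<lambda>m. \<Sum>n. c m n * x n)"

lemma matrix_apply_bound:
  assumes c: "\<And>N. section_bounded N K c" and K: "0 \<le> K" and x: "x \<in> l2"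
  shows "matrix_apply c x \<in> l2" "l2norm (matrix_apply c x) \<le> K * l2norm x"
proof -
  define X where "X = (\<Sum>n. (cmod (x n))\<^sup>2)"
  have x_summable: "summable (\<lambda>n. (cmod (x n))\<^sup>2)" using x by (simp add: l2_def)
  have truncated: "(\<Sum>m<M. (cmod (\<Sum>n<N. c m n * x n))\<^sup>2) \<le> K\<^sup>2 * X" if "M \<le> N" for M N
  proof -
    have "(\<Sum>m<M. (cmod (\<Sum>n<N. c m n * x n))\<^sup>2) \<le> (\<Sum>m<N. (cmod (\<Sum>n<N. c m n * x n))\<^sup>2)"
      using that by (intro sum_mono2) auto
    also have "\<dots> \<le> (K * L2_set (\<lambda>n. cmod (x n)) {..<N})\<^sup>2"
      unfolding L2_set_squared[symmetric]
      by (intro power_mono section_bounded_apply c K) simp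
    also have "\<dots> = K\<^sup>2 * (\<Sum>n<N. (cmod (x n))\<^sup>2)"
      by (simp add: power_mult_distrib L2_set_squared)
    also have "\<dots> \<le> K\<^sup>2 * X"
      unfolding X_def by (intro mult_left_mono sum_le_suminf x_summable) auto
    finally show ?thesis .
  qed
  note rows = section_bounded_summable_row_mult[OF c K x]
  have "(\<lambda>N. \<Sum>m<M. (cmod (\<Sum>n<N. c m n * x n))\<^sup>2)
      \<longlonglongrightarrow> (\<Sum>m<M. (cmod (matrix_apply c x m))\<^sup>2)" for M
    unfolding matrix_apply_def by (intro tendsto_sum tendsto_power tendsto_norm summable_LIMSEQ rows)
  then have partial: "(\<Sum>m<M. (cmod (matrix_apply c x m))\<^sup>2) \<le> K\<^sup>2 * X" for M
    by (rule LIMSEQ_le_const2) (use truncated in blast)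
  then have summable: "summable (\<lambda>m. (cmod (matrix_apply c x m))\<^sup>2)"
    by (intro summableI_nonneg_bounded) auto
  then show "matrix_apply c x \<in> l2" by (simp add: l2_def)
  have "l2norm (matrix_apply c x) \<le> sqrt (K\<^sup>2 * X)"
    unfolding l2norm_def by (intro real_sqrt_le_mono suminf_le_const summable partial)
  also have "\<dots> = K * l2norm x" unfolding l2norm_def X_def using K by (simp add: real_sqrt_mult)
  finally show "l2norm (matrix_apply c x) \<le> K * l2norm x" .
qed

lemma bounded_op_matrix_apply:
  assumes c: "\<And>N. section_bounded N K c" and K: "0 \<le> K"
  shows "bounded_op (matrix_apply c)"
  unfolding bounded_op_def
proof (intro conjI ballI allI)
  note rows = section_bounded_summable_row_mult[OF c K]
  show "matrix_apply c x \<in> l2" if "x \<in> l2" for x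
    using matrix_apply_bound[OF c K that] by blast
  show "matrix_apply c (\<lambda>k. x k + y k) = (\<lambda>k. matrix_apply c x k + matrix_apply c y k)"
    if "x \<in> l2" "y \<in> l2" for x y
    unfolding matrix_apply_def using rows[OF that(1)] rows[OF that(2)]
    by (simp add: distrib_left suminf_add)
  show "matrix_apply c (\<lambda>k. a * x k) = (\<lambda>k. a * matrix_apply c x k)" if "x \<in> l2" for x a
    unfolding matrix_apply_def using suminf_mult[OF rows[OF that], of a]
    by (simp add: mult_ac)
  show "\<exists>K. \<forall>x\<in>l2. l2norm (matrix_apply c x) \<le> K * l2norm x"
    using matrix_apply_bound(2)[OF c K] by blast
qed

lemma matrix_entry_matrix_apply: "matrix_entry (matrix_apply c) m n = c m n"
  unfolding matrix_entry_def matrix_apply_def using sums_mult_ebasis by (rule sums_unique[symmetric])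

theorem mainTheorem11:
  fixes A :: "(nat \<Rightarrow> complex) \<Rightarrow> (nat \<Rightarrow> complex)"
    and d :: "nat \<Rightarrow> real"
  assumes "bounded_op A"
    and "\<forall>n. d n > 0"
    and "\<forall>m n. d m < d n \<longrightarrow> matrix_entry A m n = 0"
  shows "\<exists>B. bounded_op B \<and>
           (\<forall>m n. matrix_entry B m n = complex_of_real (inverse (d m)) * matrix_entry A m n * complex_of_real (d n)) \<and>
           opnorm B \<le> opnorm A"
proof -
  define c where "c m n = complex_of_real (inverse (d m)) * matrix_entry A m n * complex_of_real (d n)" for m n
  have K: "0 \<le> opnorm A" using assms(1) by (rule opnorm_nonneg)
  have "section_bounded N (opnorm A) c" for N
  proof -
    have "section_bounded N (opnorm A) (\<lambda>m n. matrix_entry A m n * of_real (d n / d m))"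
      using section_bounded_matrix_entry[OF assms(1)] assms(2,3)
      by (intro section_bounded_diagonal_conj[of "d ` {..<N}"]) auto
    then show ?thesis by (rule section_bounded_cong) (simp add: c_def divide_inverse mult_ac)
  qed
  then have "bounded_op (matrix_apply c)" "opnorm (matrix_apply c) \<le> opnorm A"
    using bounded_op_matrix_apply K matrix_apply_bound(2) opnorm_le by blast+
  then show ?thesis using matrix_entry_matrix_apply unfolding c_def by blast
qed

end
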